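(* Let $G=(V,E,L)$ be a graph with loops, $V=[n]$, $L=L^-\cup L^+$ with $L^+\neq\emptyset$. Let $\{i,i\}\in L^+$, let $M\subseteq N(i)$ with $i\in M$, $d:=|M|$. Let $S^i_M$ be the set of $(x,Y)$, $x\in\mathbb{R}^n$, $Y$ symmetric $n\times n$, for which there exist auxiliary values $z_S$ ($S\subseteq M$, $|S|\ge3$) such that, with $z_k:=x_k$ for $k\in M$, $z_{\{k,l\}}:=Y_{kl}$ for distinct $k,l\in M$, $z_{ii}:=Y_{ii}$, $z_\emptyset:=1$, $$z_{ii}\ \ge\sum_{J\subseteq M:\, i\in J}\frac{\big(\ell_d(J,M\setminus J)\big)^2}{\ell_{d-1}(J\setminus\{i\},M\setminus J)},\qquad \ell_d(J,M\setminus J)\ge 0\quad\forall J\subseteq M.$$ Then: (i) if $|M|=2$, then $\mathcal{C}^{\rm SDP+MC}_n\subseteq S^i_M$; (ii) if $|M|>2$, then $\mathcal{C}^{\rm SDP+MC+Tri}_n\not\subseteq S^i_M$.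
   Context: A graph with loops is $G=(V,E,L)$: $V$ finite node set, $E$ a set of unordered pairs of distinct nodes, $L$ a set of loops $\{i,i\}$ partitioned as $L=L^-\cup L^+$ (minus/plus loops). $N(i):=\{j\in V:\{i,j\}\in E\cup L\}$ (so $i\in N(i)$ for a loop $\{i,i\}$). For disjoint $J_1,J_2$ with $|J_1\cup J_2|=d$, $\ell_d(J_1,J_2):=\sum_{t\subseteq J_2}(-1)^{|t|}z_{J_1\cup t}$, where $z_{\{k\}}=z_k$. Each $u^2/v$ denotes the closed perspective: $u^2/v$ if $v>0$, $0$ if $u=v=0$, $+\infty$ if $u\neq0,v=0$. $\mathcal{C}^{\rm SDP}_n$ is the set of $(x,Y)$, $x\in[0,1]^n$, $Y$ symmetric $n\times n$, with $\begin{bmatrix}1&x^\top\\ x&Y\end{bmatrix}\succeq0$ and $Y_{kk}\le x_k$ for all $k$. $\mathcal{C}^{\rm SDP+MC}_n$ adds, for all $1\le k<l\le n$, the McCormick inequalities $Y_{kl}\ge0$, $Y_{kl}\ge x_k+x_l-1$, $Y_{kl}\le x_k$, $Y_{kl}\le x_l$. $\mathcal{C}^{\rm SDP+MC+Tri}_n$ further adds, for all $1\le k<l<m\le n$, the triangle inequalities $Y_{kl}+Y_{km}\le x_k+Y_{lm}$, $Y_{kl}+Y_{lm}\le x_l+Y_{km}$, $Y_{km}+Y_{lm}\le x_m+Y_{kl}$, $x_k+x_l+x_m-Y_{kl}-Y_{km}-Y_{lm}\le1$. *)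

theory Defs
  imports Main "HOL-Library.Extended_Real"
begin

definition graph_with_loops ::
  "nat \<Rightarrow> nat set set \<Rightarrow> nat set set \<Rightarrow> nat set set \<Rightarrow> bool" where
  "graph_with_loops n E Lm Lp \<longleftrightarrow>
     E \<subseteq> {{a, b} | a b. a \<in> {1..n} \<and> b \<in> {1..n} \<and> a \<noteq> b} \<and>
     Lm \<subseteq> {{a, a} | a. a \<in> {1..n}} \<and>
     Lp \<subseteq> {{a, a} | a. a \<in> {1..n}} \<and>
     Lm \<inter> Lp = {}"

definition nbhd :: "nat \<Rightarrow> nat set set \<Rightarrow> nat set set \<Rightarrow> nat set set \<Rightarrow> nat \<Rightarrow> nat set" where
  "nbhd n E Lm Lp i = {j \<in> {1..n}. {i, j} \<in> E \<union> (Lm \<union> Lp)}"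

text \<open>Positive semidefiniteness of the (n+1)x(n+1) block matrix [[1, x^T],[x, Y]],
  rows/columns indexed by 0..n (index 0 for the leading entry).\<close>
definition block_matrix :: "(nat \<Rightarrow> real) \<Rightarrow> (nat \<Rightarrow> nat \<Rightarrow> real) \<Rightarrow> nat \<Rightarrow> nat \<Rightarrow> real" where
  "block_matrix x Y a b =
     (if a = 0 \<and> b = 0 then 1 else if a = 0 then x b else if b = 0 then x a else Y a b)"

definition psd_mat :: "nat \<Rightarrow> (nat \<Rightarrow> nat \<Rightarrow> real) \<Rightarrow> bool" where
  "psd_mat m A \<longleftrightarrow> (\<forall>a\<in>{0..m}. \<forall>b\<in>{0..m}. A a b = A b a) \<and>
     (\<forall>v :: nat \<Rightarrow> real. (\<Sum>a\<in>{0..m}. \<Sum>b\<in>{0..m}. v a * A a b * v b) \<ge> 0)"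

definition sym_on :: "nat \<Rightarrow> (nat \<Rightarrow> nat \<Rightarrow> real) \<Rightarrow> bool" where
  "sym_on n Y \<longleftrightarrow> (\<forall>k\<in>{1..n}. \<forall>l\<in>{1..n}. Y k l = Y l k)"

definition C_SDP :: "nat \<Rightarrow> ((nat \<Rightarrow> real) \<times> (nat \<Rightarrow> nat \<Rightarrow> real)) set" where
  "C_SDP n = {(x, Y). (\<forall>k\<in>{1..n}. 0 \<le> x k \<and> x k \<le> 1) \<and> sym_on n Y \<and>
      psd_mat n (block_matrix x Y) \<and> (\<forall>k\<in>{1..n}. Y k k \<le> x k)}"

definition C_SDP_MC :: "nat \<Rightarrow> ((nat \<Rightarrow> real) \<times> (nat \<Rightarrow> nat \<Rightarrow> real)) set" where
  "C_SDP_MC n = {(x, Y). (x, Y) \<in> C_SDP n \<and>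
      (\<forall>k\<in>{1..n}. \<forall>l\<in>{1..n}. k < l \<longrightarrow>
         Y k l \<ge> 0 \<and> Y k l \<ge> x k + x l - 1 \<and> Y k l \<le> x k \<and> Y k l \<le> x l)}"

definition C_SDP_MC_Tri :: "nat \<Rightarrow> ((nat \<Rightarrow> real) \<times> (nat \<Rightarrow> nat \<Rightarrow> real)) set" where
  "C_SDP_MC_Tri n = {(x, Y). (x, Y) \<in> C_SDP_MC n \<and>
      (\<forall>k\<in>{1..n}. \<forall>l\<in>{1..n}. \<forall>m\<in>{1..n}. k < l \<and> l < m \<longrightarrow>
         Y k l + Y k m \<le> x k + Y l m \<and>
         Y k l + Y l m \<le> x l + Y k m \<and>
         Y k m + Y l m \<le> x m + Y k l \<and>
         x k + x l + x m - Y k l - Y k m - Y l m \<le> 1)}"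

definition zvar :: "(nat \<Rightarrow> real) \<Rightarrow> (nat \<Rightarrow> nat \<Rightarrow> real) \<Rightarrow> (nat set \<Rightarrow> real) \<Rightarrow> nat set \<Rightarrow> real" where
  "zvar x Y w S = (if S = {} then 1 else if card S = 1 then x (the_elem S)
                   else if card S = 2 then Y (Min S) (Max S) else w S)"

definition ell :: "(nat set \<Rightarrow> real) \<Rightarrow> nat set \<Rightarrow> nat set \<Rightarrow> real" where
  "ell z J1 J2 = (\<Sum>t\<in>Pow J2. (-1) ^ card t * z (J1 \<union> t))"

text \<open>Closed perspective u^2/v (value +infinity when it is not finite).\<close>
definition persp :: "real \<Rightarrow> real \<Rightarrow> ereal" where
  "persp u v = (if v > 0 then ereal (u\<^sup>2 / v) else if u = 0 \<and> v = 0 then 0 else \<infinity>)"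

definition S_set :: "nat \<Rightarrow> nat \<Rightarrow> nat set \<Rightarrow> ((nat \<Rightarrow> real) \<times> (nat \<Rightarrow> nat \<Rightarrow> real)) set" where
  "S_set n i M = {(x, Y). sym_on n Y \<and>
     (\<exists>w :: nat set \<Rightarrow> real.
        ereal (Y i i) \<ge> (\<Sum>J\<in>{J. J \<subseteq> M \<and> i \<in> J}.
            persp (ell (zvar x Y w) J (M - J)) (ell (zvar x Y w) (J - {i}) (M - J))) \<and>
        (\<forall>J. J \<subseteq> M \<longrightarrow> ell (zvar x Y w) J (M - J) \<ge> 0))}"

end

theory Submission
  imports Defs
begin

text \<open>
  (i) For \<open>M = {i, j}\<close> no auxiliary variables occur and membership in \<open>S\<close> reads
  \<open>Y\<^sub>i\<^sub>i \<ge> (x\<^sub>i - Y\<^sub>i\<^sub>j)\<^sup>2 / (1 - x\<^sub>j) + Y\<^sub>i\<^sub>j\<^sup>2 / x\<^sub>j\<close>.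
  Writing \<open>Y\<^sub>i\<^sub>j = P x\<^sub>j\<close> and \<open>x\<^sub>i - Y\<^sub>i\<^sub>j = Q (1 - x\<^sub>j)\<close>, the right-hand side is
  \<open>P\<^sup>2 x\<^sub>j + Q\<^sup>2 (1 - x\<^sub>j)\<close>, and the PSD condition on the principal submatrix with
  indices \<open>0, i, j\<close>, tested with the vector \<open>(-Q, 1, Q - P)\<close> and combined with
  \<open>Y\<^sub>j\<^sub>j \<le> x\<^sub>j\<close>, shows that this is at most \<open>Y\<^sub>i\<^sub>i\<close>. The McCormick
  inequalities are the sign conditions on the \<open>\<ell>\<close>'s.

  (ii) Summing \<open>\<ell>(B \<union> U, K \<union> (R - U))\<close> over \<open>U \<subseteq> R\<close> eliminates the
  variables in \<open>R\<close>. Together with \<open>u\<^sup>2/v \<ge> 2u - v\<close> this shows that every point of \<open>S\<close>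
  satisfies \<open>Y\<^sub>i\<^sub>i \<ge> 2 \<ell>({i},{j,k}) - \<ell>({},{j,k})\<close> and \<open>z\<^sub>i\<^sub>j\<^sub>k \<ge> 0\<close>.
  The point with \<open>x\<^sub>i = 1/4\<close>, \<open>x\<^sub>j = x\<^sub>k = 1/2\<close>, \<open>Y\<^sub>j\<^sub>k = 1/4\<close>, \<open>Y\<^sub>i\<^sub>i = 1/5\<close>,
  \<open>Y\<^sub>a\<^sub>a = x\<^sub>a\<close> otherwise and all other entries zero satisfies the SDP, McCormick and
  triangle constraints, but the bound forces \<open>Y\<^sub>i\<^sub>i \<ge> 1/4 + 2 z\<^sub>i\<^sub>j\<^sub>k \<ge> 1/4\<close>.
\<close>

section \<open>The linear forms \<open>\<ell>\<close>\<close>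

lemma ell_empty [simp]: "ell z J {} = z J"
  by (simp add: ell_def)

lemma inj_on_insert_Pow: "e \<notin> K \<Longrightarrow> inj_on (insert e) (Pow K)"
  by (rule inj_onI) (metis PowD insert_ident subsetD)

lemma ell_insert:
  assumes "finite K" "e \<notin> K"
  shows "ell z J (insert e K) = ell z J K - ell z (insert e J) K"
proof -
  have "ell z J (insert e K) = ell z J K
      + (\<Sum>t\<in>insert e ` Pow K. (-1) ^ card t * z (J \<union> t))"
    unfolding ell_def Pow_insert using assms by (subst sum.union_disjoint) auto
  also have "(\<Sum>t\<in>insert e ` Pow K. (-1) ^ card t * z (J \<union> t))
      = (\<Sum>t\<in>Pow K. - ((-1) ^ card t * z (insert e J \<union> t)))"
  proof (subst sum.reindex[OF inj_on_insert_Pow[OF assms(2)]], rule sum.cong)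
    fix t assume "t \<in> Pow K"
    then have "finite t" "e \<notin> t" using assms finite_subset by auto
    then show "((\<lambda>t. (-1) ^ card t * z (J \<union> t)) \<circ> insert e) t
        = - ((-1) ^ card t * z (insert e J \<union> t))"
      by simp
  qed simp
  finally show ?thesis unfolding ell_def by (simp add: sum_negf)
qed

lemma ell_singleton: "ell z J {e} = z J - z (insert e J)"
  using ell_insert[of "{}" e z J] by simp

lemma ell_doubleton:
  "e \<noteq> f \<Longrightarrow> ell z J {e, f} = z J - z (insert f J) - z (insert e J) + z (insert e (insert f J))"
  using ell_insert[of "{f}" e z J] ell_insert[of "{}" f z J] ell_insert[of "{}" f z "insert e J"]
  by (simp add: insert_commute)

lemma sum_Pow_ell:
  assumes "finite R" "finite K" "R \<inter> B = {}" "R \<inter> K = {}"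
  shows "(\<Sum>U\<in>Pow R. ell z (B \<union> U) (K \<union> (R - U))) = ell z B K"
  using assms
proof (induction R rule: finite_induct)
  case empty
  then show ?case by simp
next
  case (insert e R)
  have step: "ell z (B \<union> U) (K \<union> (insert e R - U))
      + ell z (B \<union> insert e U) (K \<union> (insert e R - insert e U))
      = ell z (B \<union> U) (K \<union> (R - U))" if "U \<subseteq> R" for U
  proof -
    have "K \<union> (insert e R - U) = insert e (K \<union> (R - U))"
      and "K \<union> (insert e R - insert e U) = K \<union> (R - U)"
      and "B \<union> insert e U = insert e (B \<union> U)"
      using that insert by auto
    moreover have "finite (K \<union> (R - U))" "e \<notin> K \<union> (R - U)"
      using insert by auto
    ultimately show ?thesis by (simp add: ell_insert)
  qed
  have "(\<Sum>U\<in>Pow (insert e R). ell z (B \<union> U) (K \<union> (insert e R - U)))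
     = (\<Sum>U\<in>Pow R. ell z (B \<union> U) (K \<union> (insert e R - U)))
       + (\<Sum>U\<in>Pow R. ell z (B \<union> insert e U) (K \<union> (insert e R - insert e U)))"
    unfolding Pow_insert using insert
    by (subst sum.union_disjoint) (auto simp: sum.reindex inj_on_insert_Pow)
  also have "\<dots> = (\<Sum>U\<in>Pow R. ell z (B \<union> U) (K \<union> (R - U)))"
    unfolding sum.distrib[symmetric] by (intro sum.cong refl step) simp
  also have "\<dots> = ell z B K"
    using insert by auto
  finally show ?case .
qed

lemma ell_nonneg_of_ell_nonneg_top:
  assumes top: "\<And>J. J \<subseteq> M \<Longrightarrow> 0 \<le> ell z J (M - J)"
    and "finite M" "B \<union> K \<subseteq> M" "B \<inter> K = {}"
  shows "0 \<le> ell z B K"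
proof -
  define R where "R = M - B - K"
  have "ell z B K = (\<Sum>U\<in>Pow R. ell z (B \<union> U) (K \<union> (R - U)))"
    using assms by (intro sum_Pow_ell[symmetric]) (auto simp: R_def intro: finite_subset)
  also have "\<dots> \<ge> 0"
  proof (rule sum_nonneg)
    fix U assume "U \<in> Pow R"
    then have "B \<union> U \<subseteq> M" "M - (B \<union> U) = K \<union> (R - U)"
      using assms by (auto simp: R_def)
    then show "0 \<le> ell z (B \<union> U) (K \<union> (R - U))"
      using top by metis
  qed
  finally show ?thesis .
qed

section \<open>Perspectives\<close>

lemma persp_nonneg: "0 \<le> persp u v"
  by (auto simp: persp_def)

lemma persp_ge_tangent: "ereal (2 * u - v) \<le> persp u v"
proof (cases "v > 0")
  case True
  have "(2 * u - v) * v \<le> u\<^sup>2"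
    using zero_le_power2[of "u - v"] by (simp add: power2_eq_square algebra_simps)
  then show ?thesis
    using True by (simp add: persp_def pos_le_divide_eq)
qed (auto simp: persp_def)

lemma persp_mult_right: "0 \<le> v \<Longrightarrow> persp (p * v) v = ereal (p\<^sup>2 * v)"
  by (auto simp: persp_def power2_eq_square)

lemma persp_sum_ge_marginal:
  assumes "finite M" "i \<in> M" "K \<subseteq> M - {i}"
  shows "ereal (2 * ell z {i} K - ell z {} K)
    \<le> (\<Sum>J\<in>{J. J \<subseteq> M \<and> i \<in> J}. persp (ell z J (M - J)) (ell z (J - {i}) (M - J)))"
proof -
  define R where "R = M - {i} - K"
  have fin: "finite R" "finite K" and iR: "i \<notin> R"
    using assms by (auto simp: R_def intro: finite_subset)
  have compl: "M - insert i U = K \<union> (R - U)" "U - {i} = U" if "U \<subseteq> R" for U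
    using that assms by (auto simp: R_def)
  have "R \<inter> {i} = {}" "R \<inter> {} = {}" "R \<inter> K = {}"
    using iR by (auto simp: R_def)
  then have "2 * ell z {i} K - ell z {} K
      = (\<Sum>U\<in>Pow R. 2 * ell z ({i} \<union> U) (K \<union> (R - U)) - ell z ({} \<union> U) (K \<union> (R - U)))"
    unfolding sum_subtractf sum_distrib_left[symmetric] using fin by (simp only: sum_Pow_ell)
  also have "\<dots> = (\<Sum>U\<in>Pow R.
      2 * ell z (insert i U) (M - insert i U) - ell z (insert i U - {i}) (M - insert i U))"
    by (intro sum.cong) (simp_all add: compl)
  finally have "ereal (2 * ell z {i} K - ell z {} K) = (\<Sum>U\<in>Pow R.
      ereal (2 * ell z (insert i U) (M - insert i U) - ell z (insert i U - {i}) (M - insert i U)))"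
    by simp
  also have "\<dots> \<le> (\<Sum>U\<in>Pow R.
      persp (ell z (insert i U) (M - insert i U)) (ell z (insert i U - {i}) (M - insert i U)))"
    by (intro sum_mono persp_ge_tangent)
  also have "\<dots> = (\<Sum>J\<in>insert i ` Pow R. persp (ell z J (M - J)) (ell z (J - {i}) (M - J)))"
    by (simp add: sum.reindex inj_on_insert_Pow[OF iR])
  also have "\<dots> \<le> (\<Sum>J\<in>{J. J \<subseteq> M \<and> i \<in> J}. persp (ell z J (M - J)) (ell z (J - {i}) (M - J)))"
    using assms by (intro sum_mono2 persp_nonneg) (auto simp: R_def)
  finally show ?thesis .
qed

section \<open>The case \<open>|M| = 2\<close>\<close>

lemma zvar_singleton [simp]: "zvar x Y w {a} = x a"
  by (simp add: zvar_def)

lemma zvar_empty [simp]: "zvar x Y w {} = 1"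
  by (simp add: zvar_def)

lemma zvar_doubleton: "a \<noteq> b \<Longrightarrow> Y a b = Y b a \<Longrightarrow> zvar x Y w {a, b} = Y a b"
  by (cases "a < b") (auto simp: zvar_def min_def max_def)

lemma zvar_triple:
  "a \<noteq> b \<Longrightarrow> a \<noteq> c \<Longrightarrow> b \<noteq> c \<Longrightarrow> zvar x Y w {a, b, c} = w {a, b, c}"
  by (simp add: zvar_def)

lemma sum_sum_supported:
  fixes f :: "'a \<Rightarrow> 'a \<Rightarrow> 'b::comm_monoid_add"
  assumes "finite T" "S \<subseteq> T" "\<And>a b. a \<notin> S \<or> b \<notin> S \<Longrightarrow> f a b = 0"
  shows "(\<Sum>a\<in>T. \<Sum>b\<in>T. f a b) = (\<Sum>a\<in>S. \<Sum>b\<in>S. f a b)"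
proof -
  have "(\<Sum>a\<in>T. \<Sum>b\<in>T. f a b) = (\<Sum>a\<in>T. \<Sum>b\<in>S. f a b)"
    using assms by (intro sum.cong refl sum.mono_neutral_right) auto
  also have "\<dots> = (\<Sum>a\<in>S. \<Sum>b\<in>S. f a b)"
    using assms by (intro sum.mono_neutral_right) auto
  finally show ?thesis .
qed

lemma C_SDP_MC_McCormick:
  assumes "(x, Y) \<in> C_SDP_MC n" "k \<in> {1..n}" "l \<in> {1..n}" "k \<noteq> l"
  shows "0 \<le> Y k l \<and> x k + x l - 1 \<le> Y k l \<and> Y k l \<le> x k \<and> Y k l \<le> x l"
proof -
  have mc: "0 \<le> Y a b \<and> x a + x b - 1 \<le> Y a b \<and> Y a b \<le> x a \<and> Y a b \<le> x b"
    if "a \<in> {1..n}" "b \<in> {1..n}" "a < b" for a b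
    using assms(1) that unfolding C_SDP_MC_def by auto
  have "Y l k = Y k l"
    using assms by (auto simp: C_SDP_MC_def C_SDP_def sym_on_def)
  consider "k < l" | "l < k"
    using assms(4) by arith
  then show ?thesis
    using mc[of k l] mc[of l k] assms(2,3) \<open>Y l k = Y k l\<close> by cases auto
qed

lemma C_SDP_MC_quadratic_form:
  assumes "(x, Y) \<in> C_SDP_MC n" "i \<in> {1..n}" "j \<in> {1..n}" "i \<noteq> j"
  shows "0 \<le> \<alpha>\<^sup>2 + Y i i + \<beta>\<^sup>2 * x j + 2 * \<alpha> * x i + 2 * \<alpha> * \<beta> * x j + 2 * \<beta> * Y i j"
proof -
  have psd: "psd_mat n (block_matrix x Y)" and "Y j i = Y i j" and "Y j j \<le> x j"
    using assms by (auto simp: C_SDP_MC_def C_SDP_def sym_on_def)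
  define v where "v p = (if p = 0 then \<alpha> else if p = i then 1 else if p = j then \<beta> else 0)" for p
  have "0 \<le> (\<Sum>p\<in>{0..n}. \<Sum>q\<in>{0..n}. v p * block_matrix x Y p q * v q)"
    using psd unfolding psd_mat_def by blast
  also have "\<dots> = (\<Sum>p\<in>{0, i, j}. \<Sum>q\<in>{0, i, j}. v p * block_matrix x Y p q * v q)"
    using assms by (intro sum_sum_supported) (auto simp: v_def)
  also have "\<dots> = \<alpha>\<^sup>2 + Y i i + \<beta>\<^sup>2 * Y j j + 2 * \<alpha> * x i + 2 * \<alpha> * \<beta> * x j + 2 * \<beta> * Y i j"
    using assms \<open>Y j i = Y i j\<close>
    by (simp add: v_def block_matrix_def power2_eq_square algebra_simps)
  also have "\<dots> \<le> \<alpha>\<^sup>2 + Y i i + \<beta>\<^sup>2 * x j + 2 * \<alpha> * x i + 2 * \<alpha> * \<beta> * x j + 2 * \<beta> * Y i j"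
    using \<open>Y j j \<le> x j\<close> by (simp add: mult_left_mono)
  finally show ?thesis .
qed

lemma persp_pair_le_of_quadratic_form:
  fixes a b c y :: real
  assumes form: "\<And>\<alpha> \<beta>. 0 \<le> \<alpha>\<^sup>2 + c + \<beta>\<^sup>2 * b + 2 * \<alpha> * a + 2 * \<alpha> * \<beta> * b + 2 * \<beta> * y"
    and "0 \<le> y" "a + b - 1 \<le> y" "y \<le> a" "y \<le> b" "b \<le> 1"
  shows "persp (a - y) (1 - b) + persp y b \<le> ereal c"
proof -
  define P where "P = y / b"
  define Q where "Q = (a - y) / (1 - b)"
  \<comment> \<open>Since \<open>t / 0 = 0\<close>, this needs \<open>y = 0\<close> if \<open>b = 0\<close> and \<open>y = a\<close> if \<open>b = 1\<close>, as McCormick forces.\<close>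
  have y: "y = P * b" and ay: "a - y = Q * (1 - b)"
    using assms by (auto simp: P_def Q_def)
  have a: "a = P * b + Q * (1 - b)"
    using y ay by linarith
  have "P\<^sup>2 * b + Q\<^sup>2 * (1 - b) \<le> c"
    using form[of "- Q" "Q - P"] by (simp add: a y power2_eq_square algebra_simps)
  moreover have "persp (a - y) (1 - b) = ereal (Q\<^sup>2 * (1 - b))"
    unfolding ay using assms by (simp add: persp_mult_right)
  moreover have "persp y b = ereal (P\<^sup>2 * b)"
    using y assms by (simp add: persp_mult_right)
  ultimately show ?thesis by simp
qed

lemma C_SDP_MC_subset_S_set_pair:
  assumes "i \<in> {1..n}" "j \<in> {1..n}" "i \<noteq> j"
  shows "C_SDP_MC n \<subseteq> S_set n i {i, j}"
proof safe
  fix x Y assume xY: "(x, Y) \<in> C_SDP_MC n"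
  have sym: "sym_on n Y" and "x j \<le> 1"
    using xY assms by (auto simp: C_SDP_MC_def C_SDP_def)
  have mc: "0 \<le> Y i j" "x i + x j - 1 \<le> Y i j" "Y i j \<le> x i" "Y i j \<le> x j"
    using C_SDP_MC_McCormick[OF xY assms] by auto
  define z where "z = zvar x Y (\<lambda>_. 0)"
  have "Y j i = Y i j"
    using sym assms by (auto simp: sym_on_def)
  then have zij: "z {i, j} = Y i j" "z {j, i} = Y i j"
    using assms zvar_doubleton[of i j Y] zvar_doubleton[of j i Y] by (auto simp: z_def)
  have sum_J: "(\<Sum>J\<in>{J. J \<subseteq> {i, j} \<and> i \<in> J}. persp (ell z J ({i, j} - J)) (ell z (J - {i}) ({i, j} - J)))
      = persp (x i - Y i j) (1 - x j) + persp (Y i j) (x j)"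
  proof -
    have "{J. J \<subseteq> {i, j} \<and> i \<in> J} = {{i}, {i, j}}"
      by auto
    then show ?thesis
      using assms zij by (simp add: insert_Diff_if ell_singleton z_def)
  qed
  have nonneg: "0 \<le> ell z J ({i, j} - J)" if "J \<subseteq> {i, j}" for J
  proof -
    have "J = {} \<or> J = {i} \<or> J = {j} \<or> J = {i, j}"
      using that by blast
    then show ?thesis
      using assms zij mc \<open>x j \<le> 1\<close>
      by (elim disjE) (simp_all add: insert_Diff_if ell_singleton ell_doubleton z_def)
  qed
  have "persp (x i - Y i j) (1 - x j) + persp (Y i j) (x j) \<le> ereal (Y i i)"
    using mc \<open>x j \<le> 1\<close>
    by (intro persp_pair_le_of_quadratic_form C_SDP_MC_quadratic_form[OF xY assms])
  then have "(\<Sum>J\<in>{J. J \<subseteq> {i, j} \<and> i \<in> J}.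
      persp (ell z J ({i, j} - J)) (ell z (J - {i}) ({i, j} - J))) \<le> ereal (Y i i)"
    by (simp only: sum_J)
  then show "(x, Y) \<in> S_set n i {i, j}"
    using sym nonneg unfolding S_set_def z_def by blast
qed

section \<open>The case \<open>|M| > 2\<close>\<close>

definition tri_witness_x :: "nat \<Rightarrow> nat \<Rightarrow> nat \<Rightarrow> nat \<Rightarrow> real" where
  "tri_witness_x i j k a = (if a = i then 1/4 else if a = j \<or> a = k then 1/2 else 0)"

definition tri_witness_Y :: "nat \<Rightarrow> nat \<Rightarrow> nat \<Rightarrow> nat \<Rightarrow> nat \<Rightarrow> real" where
  "tri_witness_Y i j k a b =
    (if a = b then (if a = i then 1/5 else tri_witness_x i j k a)
     else if (a = j \<and> b = k) \<or> (a = k \<and> b = j) then 1/4 else 0)"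

lemma tri_witness_Y_sym: "tri_witness_Y i j k a b = tri_witness_Y i j k b a"
  by (auto simp: tri_witness_Y_def)

lemma tri_witness_psd:
  assumes "i \<in> {1..n}" "j \<in> {1..n}" "k \<in> {1..n}" "i \<noteq> j" "i \<noteq> k" "j \<noteq> k"
  shows "psd_mat n (block_matrix (tri_witness_x i j k) (tri_witness_Y i j k))"
  unfolding psd_mat_def
proof (intro conjI ballI allI)
  fix a b
  show "block_matrix (tri_witness_x i j k) (tri_witness_Y i j k) a b
      = block_matrix (tri_witness_x i j k) (tri_witness_Y i j k) b a"
    by (simp add: block_matrix_def tri_witness_Y_sym)
next
  fix v :: "nat \<Rightarrow> real"
  let ?A = "block_matrix (tri_witness_x i j k) (tri_witness_Y i j k)"
  have "(\<Sum>a\<in>{0..n}. \<Sum>b\<in>{0..n}. v a * ?A a b * v b)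
      = (\<Sum>a\<in>{0, i, j, k}. \<Sum>b\<in>{0, i, j, k}. v a * ?A a b * v b)"
    using assms
    by (intro sum_sum_supported) (auto simp: block_matrix_def tri_witness_x_def tri_witness_Y_def)
  also have "\<dots> = (v 0 + v i / 4 + v j / 2 + v k / 2)\<^sup>2 + (v j - v i / 2)\<^sup>2 / 4
      + (v k - v i / 2)\<^sup>2 / 4 + (v i)\<^sup>2 / 80"
    using assms
    by (simp add: block_matrix_def tri_witness_x_def tri_witness_Y_def
        power2_eq_square algebra_simps) (simp add: field_simps)
  finally show "0 \<le> (\<Sum>a\<in>{0..n}. \<Sum>b\<in>{0..n}. v a * ?A a b * v b)"
    by simp
qed

lemma tri_witness_McCormick:
  fixes i j k :: nat
  defines "x \<equiv> tri_witness_x i j k" and "Y \<equiv> tri_witness_Y i j k"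
  assumes "i \<noteq> j" "i \<noteq> k" "j \<noteq> k" "a \<noteq> b"
  shows "0 \<le> Y a b \<and> x a + x b - 1 \<le> Y a b \<and> Y a b \<le> x a \<and> Y a b \<le> x b"
  using assms by (auto simp: tri_witness_x_def tri_witness_Y_def)

lemma tri_witness_triangle:
  fixes i j k :: nat
  defines "x \<equiv> tri_witness_x i j k" and "Y \<equiv> tri_witness_Y i j k"
  assumes "i \<noteq> j" "i \<noteq> k" "j \<noteq> k" "a < b" "b < c"
  shows "Y a b + Y a c \<le> x a + Y b c \<and> Y a b + Y b c \<le> x b + Y a c
    \<and> Y a c + Y b c \<le> x c + Y a b \<and> x a + x b + x c - Y a b - Y a c - Y b c \<le> 1"
  using assms by (auto simp: tri_witness_x_def tri_witness_Y_def)

lemma tri_witness_in_C_SDP_MC_Tri: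
  assumes "i \<in> {1..n}" "j \<in> {1..n}" "k \<in> {1..n}" "i \<noteq> j" "i \<noteq> k" "j \<noteq> k"
  shows "(tri_witness_x i j k, tri_witness_Y i j k) \<in> C_SDP_MC_Tri n"
  unfolding C_SDP_MC_Tri_def C_SDP_MC_def C_SDP_def mem_Collect_eq prod.case
proof (intro conjI)
  show "psd_mat n (block_matrix (tri_witness_x i j k) (tri_witness_Y i j k))"
    using assms by (rule tri_witness_psd)
  show "sym_on n (tri_witness_Y i j k)"
    by (simp add: sym_on_def tri_witness_Y_sym)
qed (use tri_witness_McCormick[OF assms(4-6)] tri_witness_triangle[OF assms(4-6)] in
     \<open>auto simp: tri_witness_x_def tri_witness_Y_def\<close>)

lemma tri_witness_notin_S_set:
  assumes "finite M" "i \<in> M" "j \<in> M" "k \<in> M" "i \<noteq> j" "i \<noteq> k" "j \<noteq> k"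
  shows "(tri_witness_x i j k, tri_witness_Y i j k) \<notin> S_set n i M"
proof
  let ?x = "tri_witness_x i j k" and ?Y = "tri_witness_Y i j k"
  assume "(?x, ?Y) \<in> S_set n i M"
  then obtain w where bound: "(\<Sum>J\<in>{J. J \<subseteq> M \<and> i \<in> J}.
        persp (ell (zvar ?x ?Y w) J (M - J)) (ell (zvar ?x ?Y w) (J - {i}) (M - J))) \<le> ereal (?Y i i)"
      and top: "\<And>J. J \<subseteq> M \<Longrightarrow> 0 \<le> ell (zvar ?x ?Y w) J (M - J)"
    unfolding S_set_def by blast
  define z where "z = zvar ?x ?Y w"
  have "0 \<le> ell z {i, j, k} {}"
    using top[folded z_def] assms(1) by (rule ell_nonneg_of_ell_nonneg_top) (use assms in auto)
  have z01: "z {} = 1" "z {a} = ?x a" for a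
    by (simp_all add: z_def)
  have zY: "z {a, b} = ?Y a b" if "a \<noteq> b" for a b
    unfolding z_def using that tri_witness_Y_sym by (rule zvar_doubleton)
  have "{j, k, i} = {i, j, k}"
    by auto
  then have zijk: "z {j, k, i} = w {i, j, k}"
    using assms by (simp add: z_def zvar_triple)
  have "ell z {i} {j, k} = 1/4 + w {i, j, k}" "ell z {} {j, k} = 1/4"
    using assms by (simp_all add: ell_doubleton z01 zY zijk tri_witness_x_def tri_witness_Y_def)
  moreover have "{j, k} \<subseteq> M - {i}"
    using assms by auto
  then have "ereal (2 * ell z {i} {j, k} - ell z {} {j, k}) \<le> ereal (?Y i i)"
    by (rule order.trans[OF persp_sum_ge_marginal[OF assms(1,2)] bound[folded z_def]])
  moreover have "0 \<le> w {i, j, k}"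
    using \<open>0 \<le> ell z {i, j, k} {}\<close> assms by (simp add: z_def zvar_triple)
  ultimately show False
    by (simp add: tri_witness_Y_def)
qed

theorem proposition7:
  fixes n i :: nat and E Lm Lp :: "nat set set" and M :: "nat set"
  assumes "graph_with_loops n E Lm Lp"
    and "Lp \<noteq> {}"
    and "{i, i} \<in> Lp"
    and "M \<subseteq> nbhd n E Lm Lp i"
    and "i \<in> M"
  shows "(card M = 2 \<longrightarrow> C_SDP_MC n \<subseteq> S_set n i M) \<and>
         (card M > 2 \<longrightarrow> \<not> (C_SDP_MC_Tri n \<subseteq> S_set n i M))"
proof -
  have MV: "M \<subseteq> {1..n}"
    using assms(4) unfolding nbhd_def by auto
  then have "finite M"
    using finite_subset by blast
  show ?thesis
  proof (intro conjI impI)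
    assume "card M = 2"
    then obtain j where "M = {i, j}" "i \<noteq> j"
      using \<open>i \<in> M\<close> by (auto simp: card_2_iff)
    then show "C_SDP_MC n \<subseteq> S_set n i M"
      using MV C_SDP_MC_subset_S_set_pair[of i n j] by simp
  next
    assume "card M > 2"
    then have "2 \<le> card (M - {i})"
      using \<open>finite M\<close> \<open>i \<in> M\<close> by simp
    then obtain j k where "{j, k} \<subseteq> M - {i}" "j \<noteq> k"
      by (metis card_2_iff obtain_subset_with_card_n)
    then have "j \<in> M" "k \<in> M" "i \<noteq> j" "i \<noteq> k" "j \<noteq> k"
      by auto
    then show "\<not> (C_SDP_MC_Tri n \<subseteq> S_set n i M)"
      using MV \<open>finite M\<close> \<open>i \<in> M\<close> tri_witness_in_C_SDP_MC_Tri[of i n j k]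
        tri_witness_notin_S_set[of M i j k n]
      by blast
  qed
qed

end
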